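(* Let $n\ge2$ and $0\le\epsilon<1/2$, and let $U_0,\dots,U_T$ be a quantum query algorithm with $T$ queries to the comparison oracle which, for every permutation $\sigma$ of $\{0,\dots,n-1\}$, outputs $\sigma$ with probability at least $1-\epsilon$ (via a fixed measurement of the final state). With $s_t$ defined as below, $s_T\le 2\sqrt{\epsilon(1-\epsilon)}\,s_0$.
   Context: For a permutation $\sigma$ of $\{0,\dots,n-1\}$, the comparison matrix $M_\sigma\in\{0,1\}^{n\times n}$ has $(M_\sigma)_{i,j}=1$ if $\sigma(i)\le\sigma(j)$ and $0$ otherwise. $H$ is the Hilbert space spanned by orthonormal vectors $|i,j,b,c\rangle$, $0\le i,j\le n-1$, $b\in\{0,1\}$, $c\in\{0,1\}^w$ for some fixed $w\ge0$, and $O_\sigma|i,j,b,c\rangle=|i,j,b\oplus(M_\sigma)_{i,j},c\rangle$. For $0\le t\le T$, $|\psi_\sigma^t\rangle=U_tO_\sigma U_{t-1}O_\sigma\cdots U_1O_\sigma U_0|\vec0\rangle$. For $0\le k\le n-2$, $1\le d\le n-k-1$, $\sigma^{(k,d)}=(k+d,k+d-1,\dots,k)\circ\sigma$ (the cycle sends $k+d\mapsto k+d-1\mapsto\cdots\mapsto k\mapsto k+d$); $w(\sigma,\tau)=1/d$ if $\tau=\sigma^{(k,d)}$ for some such $k,d$, and $0$ otherwise. Finally $s_t=\sum_{\sigma,\tau}w(\sigma,\tau)\,|\langle\psi^t_\sigma|\psi^t_\tau\rangle|$. *)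

theory Defs
  imports "Jordan_Normal_Form.Schur_Decomposition" "HOL-Combinatorics.Permutations"
begin

(* Basis |i,j,b,c> with 0<=i,j<n, b in {0,1}, c in {0,1}^w (encoded as c < 2^w),
   indexed as ((i*n+j)*2+b)*2^w + c.  H = C^(dimH n w). *)
definition dimH :: "nat \<Rightarrow> nat \<Rightarrow> nat" where
  "dimH n w = n * n * 2 * 2 ^ w"

definition bidx :: "nat \<Rightarrow> nat \<Rightarrow> nat \<Rightarrow> nat \<Rightarrow> nat \<Rightarrow> nat \<Rightarrow> nat" where
  "bidx n w i j b c = ((i * n + j) * 2 + b) * 2 ^ w + c"

definition cmpM :: "(nat \<Rightarrow> nat) \<Rightarrow> nat \<Rightarrow> nat \<Rightarrow> nat" where
  "cmpM \<sigma> i j = (if \<sigma> i \<le> \<sigma> j then 1 else 0)"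

(* O_sigma |i,j,b,c> = |i,j,b xor M_{ij},c> *)
definition Omat :: "nat \<Rightarrow> nat \<Rightarrow> (nat \<Rightarrow> nat) \<Rightarrow> complex mat" where
  "Omat n w \<sigma> = mat (dimH n w) (dimH n w) (\<lambda>(r, s).
     if (\<exists>i<n. \<exists>j<n. \<exists>b<2. \<exists>c<2 ^ w.
            s = bidx n w i j b c \<and> r = bidx n w i j ((b + cmpM \<sigma> i j) mod 2) c)
     then 1 else 0)"

definition unitary_mat :: "nat \<Rightarrow> complex mat \<Rightarrow> bool" where
  "unitary_mat N U \<longleftrightarrow> U \<in> carrier_mat N N \<and> mat_adjoint U * U = 1\<^sub>m N"

definition psd_mat :: "nat \<Rightarrow> complex mat \<Rightarrow> bool" where
  "psd_mat N E \<longleftrightarrow> E \<in> carrier_mat N N \<and> mat_adjoint E = E \<and>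
     (\<forall>v\<in>carrier_vec N. 0 \<le> Re ((E *\<^sub>v v) \<bullet>c v))"

fun psi :: "nat \<Rightarrow> nat \<Rightarrow> (nat \<Rightarrow> complex mat) \<Rightarrow> (nat \<Rightarrow> nat) \<Rightarrow> nat \<Rightarrow> complex vec" where
  "psi n w U \<sigma> 0 = U 0 *\<^sub>v unit_vec (dimH n w) (bidx n w 0 0 0 0)"
| "psi n w U \<sigma> (Suc t) = U (Suc t) *\<^sub>v (Omat n w \<sigma> *\<^sub>v psi n w U \<sigma> t)"

definition perms :: "nat \<Rightarrow> (nat \<Rightarrow> nat) set" where
  "perms n = {\<sigma>. \<sigma> permutes {..<n}}"

definition cyc :: "nat \<Rightarrow> nat \<Rightarrow> nat \<Rightarrow> nat" where
  "cyc k d x = (if x = k then k + d else if k < x \<and> x \<le> k + d then x - 1 else x)"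

definition valid_kd :: "nat \<Rightarrow> nat \<Rightarrow> nat \<Rightarrow> bool" where
  "valid_kd n k d \<longleftrightarrow> k \<le> n - 2 \<and> 1 \<le> d \<and> d \<le> n - k - 1"

definition wt :: "nat \<Rightarrow> (nat \<Rightarrow> nat) \<Rightarrow> (nat \<Rightarrow> nat) \<Rightarrow> real" where
  "wt n \<sigma> \<tau> = (if \<exists>k d. valid_kd n k d \<and> \<tau> = cyc k d \<circ> \<sigma>
      then 1 / real (THE d. \<exists>k. valid_kd n k d \<and> \<tau> = cyc k d \<circ> \<sigma>) else 0)"

definition s_prog :: "nat \<Rightarrow> nat \<Rightarrow> (nat \<Rightarrow> complex mat) \<Rightarrow> nat \<Rightarrow> real" where
  "s_prog n w U t = (\<Sum>\<sigma>\<in>perms n. \<Sum>\<tau>\<in>perms n.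
      wt n \<sigma> \<tau> * cmod (psi n w U \<sigma> t \<bullet>c psi n w U \<tau> t))"

end

theory Submission
  imports Defs
begin

(* The initial state U_0|0> does not depend on sigma, so every overlap in s_0 equals 1, and since
   oracle calls and the U_t are unitary all states remain unit vectors. At time T the measurement
   separates sigma from any tau <> sigma: writing the identity as A + B with A = E_sigma and
   B = sum of the E_rho with rho <> sigma (so B >= E_tau), Cauchy-Schwarz for the positive forms A
   and B gives |<psi_sigma|psi_tau>| <= sqrt (p q) + sqrt ((1 - p) (1 - q)) with p >= 1 - eps and
   q <= eps, which is at most 2 sqrt (eps (1 - eps)). As w(sigma, tau) > 0 forces tau <> sigma,
   summing the overlaps weighted by w gives the claim. *)

(* The form (A x, y) on C^N, with A, x, y given by their entries; this keeps the algebra below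
   free of carrier side conditions. *)
definition sesq :: "nat \<Rightarrow> (nat \<Rightarrow> nat \<Rightarrow> complex) \<Rightarrow> (nat \<Rightarrow> complex) \<Rightarrow> (nat \<Rightarrow> complex) \<Rightarrow> complex"
  where "sesq N A x y = (\<Sum>i<N. \<Sum>j<N. A i j * x j * cnj (y i))"

lemma sesq_mat_vec:
  assumes "M \<in> carrier_mat N N" "x \<in> carrier_vec N" "y \<in> carrier_vec N"
  shows "(M *\<^sub>v x) \<bullet>c y = sesq N (\<lambda>i j. M $$ (i, j)) (($) x) (($) y)"
  using assms unfolding sesq_def scalar_prod_def
  by (auto simp: conjugate_complex_def row_def scalar_prod_def lessThan_atLeast0
      sum_distrib_right sum_distrib_left mult.commute mult.left_commute intro!: sum.cong)

lemma sesq_cong: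
  assumes "\<And>i j. i < N \<Longrightarrow> j < N \<Longrightarrow> A i j = B i j"
    and "\<And>j. j < N \<Longrightarrow> x j = x' j" and "\<And>j. j < N \<Longrightarrow> y j = y' j"
  shows "sesq N A x y = sesq N B x' y'"
  using assms unfolding sesq_def by (auto intro!: sum.cong)

lemma sesq_add_kernel: "sesq N (\<lambda>i j. A i j + B i j) x y = sesq N A x y + sesq N B x y"
  unfolding sesq_def by (simp add: distrib_right sum.distrib)

lemma sesq_sum_kernel: "sesq N (\<lambda>i j. \<Sum>r\<in>S. F r i j) x y = (\<Sum>r\<in>S. sesq N (F r) x y)"
proof -
  have "sesq N (\<lambda>i j. \<Sum>r\<in>S. F r i j) x y = (\<Sum>i<N. \<Sum>j<N. \<Sum>r\<in>S. F r i j * x j * cnj (y i))"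
    unfolding sesq_def by (simp add: sum_distrib_right)
  also have "\<dots> = (\<Sum>i<N. \<Sum>r\<in>S. \<Sum>j<N. F r i j * x j * cnj (y i))"
    by (rule sum.cong[OF refl], rule sum.swap)
  also have "\<dots> = (\<Sum>r\<in>S. \<Sum>i<N. \<Sum>j<N. F r i j * x j * cnj (y i))"
    by (rule sum.swap)
  finally show ?thesis unfolding sesq_def .
qed

lemma sesq_add_left: "sesq N A (\<lambda>j. x j + z j) y = sesq N A x y + sesq N A z y"
  unfolding sesq_def by (simp add: distrib_left distrib_right sum.distrib)

lemma sesq_add_right: "sesq N A x (\<lambda>j. y j + z j) = sesq N A x y + sesq N A x z"
  unfolding sesq_def by (simp add: distrib_left sum.distrib)

lemma sesq_scale_left: "sesq N A (\<lambda>j. l * x j) y = l * sesq N A x y"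
  unfolding sesq_def by (simp add: sum_distrib_left mult_ac)

lemma sesq_scale_right: "sesq N A x (\<lambda>j. l * y j) = cnj l * sesq N A x y"
  unfolding sesq_def by (simp add: sum_distrib_left mult_ac)

lemma sesq_swap:
  assumes "\<And>i j. i < N \<Longrightarrow> j < N \<Longrightarrow> A i j = cnj (A j i)"
  shows "sesq N A y x = cnj (sesq N A x y)"
proof -
  have cnj_A: "cnj (A i j) = A j i" if "i < N" "j < N" for i j
    using assms[OF that(2,1)] by simp
  have "cnj (sesq N A x y) = (\<Sum>i<N. \<Sum>j<N. cnj (A i j) * cnj (x j) * y i)"
    unfolding sesq_def by simp
  also have "\<dots> = (\<Sum>i<N. \<Sum>j<N. A j i * y i * cnj (x j))"
    using cnj_A by (auto simp: mult_ac intro!: sum.cong)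
  also have "\<dots> = sesq N A y x"
    unfolding sesq_def by (rule sum.swap)
  finally show ?thesis by simp
qed

lemma le_mult_of_quadratic_nonneg:
  fixes a b k :: real
  assumes quad: "\<And>t. 0 \<le> a - 2 * t * k + t\<^sup>2 * k * b" and "0 \<le> b"
  shows "k \<le> a * b"
proof (cases "b = 0")
  case True
  show ?thesis
  proof (rule ccontr)
    assume "\<not> k \<le> a * b"
    then have "k > 0" using True by simp
    have "0 \<le> a - 2 * ((a + 1) / (2 * k)) * k + ((a + 1) / (2 * k))\<^sup>2 * k * b" by (rule quad)
    also have "\<dots> = -1" using \<open>k > 0\<close> True by (simp add: field_simps)
    finally show False by simp
  qed
next
  case False
  then have "b > 0" using assms by simp
  have "0 \<le> a - 2 * (1 / b) * k + (1 / b)\<^sup>2 * k * b" by (rule quad)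
  also have "\<dots> = (a * b - k) / b" using \<open>b > 0\<close> by (simp add: field_simps power2_eq_square)
  finally show ?thesis using \<open>b > 0\<close> by (simp add: zero_le_divide_iff)
qed

lemma sesq_cauchy_schwarz:
  assumes psd: "\<And>z. 0 \<le> Re (sesq N A z z)"
    and herm: "\<And>i j. i < N \<Longrightarrow> j < N \<Longrightarrow> A i j = cnj (A j i)"
  shows "(cmod (sesq N A x y))\<^sup>2 \<le> Re (sesq N A x x) * Re (sesq N A y y)"
proof -
  define c where "c = sesq N A x y"
  have swap: "sesq N A u v = cnj (sesq N A v u)" for u v
    by (rule sesq_swap) (rule herm)
  have "Im (sesq N A y y) = 0"
    using swap[of y y] by (metis cnj.sel(2) neg_equal_zero)
  then have real_yy: "sesq N A y y = of_real (Re (sesq N A y y))"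
    by (simp add: complex_eq_iff)
  have "0 \<le> Re (sesq N A x x) - 2 * t * (cmod c)\<^sup>2 + t\<^sup>2 * (cmod c)\<^sup>2 * Re (sesq N A y y)"
    for t :: real
  proof -
    define l where "l = - (of_real t * c)"
    have expand: "sesq N A (\<lambda>j. x j + l * y j) (\<lambda>j. x j + l * y j)
        = sesq N A x x + cnj l * c + l * cnj c + l * cnj l * sesq N A y y"
      using swap[of y x] by (simp add: sesq_add_left sesq_add_right sesq_scale_left
          sesq_scale_right c_def algebra_simps)
    have coeffs: "cnj l * c = - of_real (t * (cmod c)\<^sup>2)" "l * cnj c = - of_real (t * (cmod c)\<^sup>2)"
      "l * cnj l = of_real (t\<^sup>2 * (cmod c)\<^sup>2)"
      using complex_norm_square[of c] unfolding l_def by (simp_all add: mult_ac power2_eq_square)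
    show ?thesis
      using psd[of "\<lambda>j. x j + l * y j"] unfolding expand coeffs by (subst (asm) real_yy) simp
  qed
  then show ?thesis
    unfolding c_def by (rule le_mult_of_quadratic_nonneg) (rule psd)
qed

lemma sqrt_mult_add_sqrt_compl_mult_le:
  fixes p q \<epsilon> :: real
  assumes "1 - \<epsilon> \<le> p" "p \<le> 1" "0 \<le> q" "q \<le> \<epsilon>" "\<epsilon> < 1 / 2"
  shows "sqrt (p * q) + sqrt ((1 - p) * (1 - q)) \<le> 2 * sqrt (\<epsilon> * (1 - \<epsilon>))"
proof -
  define x y z t where "x = sqrt p" and "y = sqrt (1 - p)" and "z = sqrt q" and "t = sqrt (1 - q)"
  have squares: "x\<^sup>2 = p" "y\<^sup>2 = 1 - p" "z\<^sup>2 = q" "t\<^sup>2 = 1 - q"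
    unfolding x_def y_def z_def t_def using assms by simp_all
  have nonneg: "0 \<le> x" "0 \<le> y" "0 \<le> z" "0 \<le> t"
    unfolding x_def y_def z_def t_def using assms by simp_all
  have "sqrt (1 - \<epsilon>) * sqrt (1 - \<epsilon>) \<le> x * t"
    unfolding x_def t_def using assms by (intro mult_mono) simp_all
  moreover have "y * z \<le> sqrt \<epsilon> * sqrt \<epsilon>"
    unfolding y_def z_def using assms by (intro mult_mono) simp_all
  ultimately have "1 - 2 * \<epsilon> \<le> x * t - y * z"
    using assms by simp
  then have "(1 - 2 * \<epsilon>)\<^sup>2 \<le> (x * t - y * z)\<^sup>2"
    using assms by (intro power_mono) simp_all
  moreover have "(x * z + y * t)\<^sup>2 + (x * t - y * z)\<^sup>2 = (x\<^sup>2 + y\<^sup>2) * (z\<^sup>2 + t\<^sup>2)"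
    by (simp add: power2_eq_square algebra_simps)
  then have "(x * z + y * t)\<^sup>2 + (x * t - y * z)\<^sup>2 = 1"
    using squares by simp
  ultimately have "(x * z + y * t)\<^sup>2 \<le> 1 - (1 - 2 * \<epsilon>)\<^sup>2"
    by linarith
  also have "\<dots> = 4 * (\<epsilon> * (1 - \<epsilon>))"
    by (simp add: power2_eq_square algebra_simps)
  also have "\<dots> = (2 * sqrt (\<epsilon> * (1 - \<epsilon>)))\<^sup>2"
    using assms by (simp add: power_mult_distrib)
  finally have "(x * z + y * t)\<^sup>2 \<le> (2 * sqrt (\<epsilon> * (1 - \<epsilon>)))\<^sup>2" .
  then have "x * z + y * t \<le> 2 * sqrt (\<epsilon> * (1 - \<epsilon>))"
    by (rule power2_le_imp_le) (use assms in simp)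
  then show ?thesis
    unfolding x_def y_def z_def t_def by (simp add: real_sqrt_mult)
qed

lemma mat_adjoint_index:
  assumes "i < dim_col M" "j < dim_row M"
  shows "mat_adjoint M $$ (i, j) = cnj (M $$ (j, i))"
  using assms by (simp add: mat_adjoint_def mat_of_rows_index conjugate_complex_def)

lemma mat_adjoint_mult_index:
  assumes "M \<in> carrier_mat N N" "k < N" "j < N"
  shows "(mat_adjoint M * M) $$ (k, j) = (\<Sum>i<N. cnj (M $$ (i, k)) * M $$ (i, j))"
  using assms unfolding mat_adjoint_def
  by (simp add: scalar_prod_def lessThan_atLeast0 conjugate_complex_def mat_of_rows_index)

lemma unitary_mat_cscalar_prod:
  assumes "unitary_mat N U" "x \<in> carrier_vec N" "y \<in> carrier_vec N"
  shows "(U *\<^sub>v x) \<bullet>c (U *\<^sub>v y) = x \<bullet>c y"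
proof -
  have U: "U \<in> carrier_mat N N" and UU: "mat_adjoint U * U = 1\<^sub>m N"
    using assms(1) unfolding unitary_mat_def by auto
  have "(U *\<^sub>v x) \<bullet>c (U *\<^sub>v y)
      = (\<Sum>i<N. \<Sum>k<N. \<Sum>j<N. x $ j * (cnj (y $ k) * (U $$ (i, j) * cnj (U $$ (i, k)))))"
    using U assms(2,3) by (simp add: scalar_prod_def lessThan_atLeast0 conjugate_complex_def
        sum_distrib_left sum_distrib_right mult_ac)
  also have "\<dots> = (\<Sum>k<N. \<Sum>j<N. \<Sum>i<N. x $ j * (cnj (y $ k) * (U $$ (i, j) * cnj (U $$ (i, k)))))"
    by (subst sum.swap) (rule sum.cong[OF refl], rule sum.swap)
  also have "\<dots> = (\<Sum>k<N. \<Sum>j<N. x $ j * cnj (y $ k) * (mat_adjoint U * U) $$ (k, j))"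
    using U by (simp add: mat_adjoint_mult_index sum_distrib_left mult_ac)
  also have "\<dots> = (\<Sum>k<N. x $ k * cnj (y $ k))"
    unfolding UU by (simp add: if_distrib cong: if_cong)
  also have "\<dots> = x \<bullet>c y"
    using assms(3) by (simp add: scalar_prod_def lessThan_atLeast0 conjugate_complex_def)
  finally show ?thesis .
qed

lemma unitary_mat_of_permutation:
  assumes "M \<in> carrier_mat N N" "bij_betw \<pi> {..<N} {..<N}"
    and entries: "\<And>r s. r < N \<Longrightarrow> s < N \<Longrightarrow> M $$ (r, s) = (if r = \<pi> s then 1 else 0)"
  shows "unitary_mat N M"
  unfolding unitary_mat_def
proof (intro conjI eq_matI)
  fix k j assume "k < dim_row (1\<^sub>m N)" "j < dim_col (1\<^sub>m N)"
  then have "k < N" "j < N" by simp_all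
  then have "\<pi> k < N" "\<pi> j < N"
    using bij_betw_apply[OF assms(2)] by simp_all
  have "(mat_adjoint M * M) $$ (k, j) = (\<Sum>i<N. if i = \<pi> k \<and> i = \<pi> j then 1 else 0)"
    using assms(1) \<open>k < N\<close> \<open>j < N\<close> by (simp add: mat_adjoint_mult_index entries if_distrib cong: if_cong)
  also have "\<dots> = 1\<^sub>m N $$ (k, j)"
    using \<open>\<pi> k < N\<close> \<open>k < N\<close> \<open>j < N\<close> bij_betw_imp_inj_on[OF assms(2)] by (auto simp: inj_on_eq_iff)
  finally show "(mat_adjoint M * M) $$ (k, j) = 1\<^sub>m N $$ (k, j)" .
qed (use assms(1) in \<open>auto simp: mat_adjoint_def\<close>)

lemma psd_mat_sesq_nonneg:
  assumes "psd_mat N M"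
  shows "0 \<le> Re (sesq N (\<lambda>i j. M $$ (i, j)) z z)"
proof -
  have M: "M \<in> carrier_mat N N"
    using assms unfolding psd_mat_def by auto
  have "0 \<le> Re ((M *\<^sub>v vec N z) \<bullet>c vec N z)"
    using assms unfolding psd_mat_def by auto
  also have "(M *\<^sub>v vec N z) \<bullet>c vec N z = sesq N (\<lambda>i j. M $$ (i, j)) z z"
    unfolding sesq_mat_vec[OF M vec_carrier vec_carrier] by (rule sesq_cong) simp_all
  finally show ?thesis .
qed

lemma psd_mat_hermitian:
  assumes "psd_mat N M" "i < N" "j < N"
  shows "M $$ (i, j) = cnj (M $$ (j, i))"
proof -
  have "M \<in> carrier_mat N N" "mat_adjoint M = M"
    using assms(1) unfolding psd_mat_def by auto
  then show ?thesis
    using mat_adjoint_index[of i M j] assms(2,3) by auto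
qed

lemma cscalar_prod_eq_sesq_add:
  assumes "\<And>i j. i < N \<Longrightarrow> j < N \<Longrightarrow> A i j + B i j = 1\<^sub>m N $$ (i, j)"
    and "x \<in> carrier_vec N" "y \<in> carrier_vec N"
  shows "x \<bullet>c y = sesq N A (($) x) (($) y) + sesq N B (($) x) (($) y)"
proof -
  have "x \<bullet>c y = (1\<^sub>m N *\<^sub>v x) \<bullet>c y"
    using assms(2) by simp
  also have "\<dots> = sesq N (\<lambda>i j. A i j + B i j) (($) x) (($) y)"
    unfolding sesq_mat_vec[OF one_carrier_mat assms(2,3)] by (intro sesq_cong) (simp_all add: assms(1))
  finally show ?thesis
    by (simp add: sesq_add_kernel)
qed

lemma Re_sesq_add_Re_sesq_unit:
  assumes "\<And>i j. i < N \<Longrightarrow> j < N \<Longrightarrow> A i j + B i j = 1\<^sub>m N $$ (i, j)"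
    and "x \<in> carrier_vec N" "x \<bullet>c x = 1"
  shows "Re (sesq N A (($) x) (($) x)) + Re (sesq N B (($) x) (($) x)) = 1"
  using arg_cong[OF cscalar_prod_eq_sesq_add[OF assms(1) assms(2) assms(2)], of Re] assms(3) by simp

lemma cmod_cscalar_prod_le_of_resolution:
  assumes psd_A: "\<And>z. 0 \<le> Re (sesq N A z z)" and psd_B: "\<And>z. 0 \<le> Re (sesq N B z z)"
    and herm_A: "\<And>i j. i < N \<Longrightarrow> j < N \<Longrightarrow> A i j = cnj (A j i)"
    and herm_B: "\<And>i j. i < N \<Longrightarrow> j < N \<Longrightarrow> B i j = cnj (B j i)"
    and resolution: "\<And>i j. i < N \<Longrightarrow> j < N \<Longrightarrow> A i j + B i j = 1\<^sub>m N $$ (i, j)"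
    and u: "u \<in> carrier_vec N" "u \<bullet>c u = 1" and v: "v \<in> carrier_vec N" "v \<bullet>c v = 1"
  defines "p \<equiv> Re (sesq N A (($) u) (($) u))" and "q \<equiv> Re (sesq N A (($) v) (($) v))"
  shows "cmod (u \<bullet>c v) \<le> sqrt (p * q) + sqrt ((1 - p) * (1 - q))"
proof -
  have "Re (sesq N B (($) u) (($) u)) = 1 - p" "Re (sesq N B (($) v) (($) v)) = 1 - q"
    using Re_sesq_add_Re_sesq_unit[OF resolution u] Re_sesq_add_Re_sesq_unit[OF resolution v]
    unfolding p_def q_def by simp_all
  then have CS_B: "(cmod (sesq N B (($) u) (($) v)))\<^sup>2 \<le> (1 - p) * (1 - q)"
    using sesq_cauchy_schwarz[OF psd_B herm_B] by metis
  have CS_A: "(cmod (sesq N A (($) u) (($) v)))\<^sup>2 \<le> p * q"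
    unfolding p_def q_def by (rule sesq_cauchy_schwarz[OF psd_A herm_A])
  have "cmod (u \<bullet>c v) \<le> cmod (sesq N A (($) u) (($) v)) + cmod (sesq N B (($) u) (($) v))"
    using cscalar_prod_eq_sesq_add[OF resolution u(1) v(1)] by (simp add: norm_triangle_ineq)
  also have "\<dots> \<le> sqrt (p * q) + sqrt ((1 - p) * (1 - q))"
    using CS_A CS_B by (intro add_mono real_le_rsqrt)
  finally show ?thesis .
qed

lemma cmod_cscalar_prod_le_of_povm:
  fixes E :: "'a \<Rightarrow> complex mat"
  assumes "finite P" "\<sigma> \<in> P" "\<tau> \<in> P" "\<sigma> \<noteq> \<tau>"
    and psd: "\<forall>\<rho>\<in>P. psd_mat N (E \<rho>)"
    and complete: "\<forall>r<N. \<forall>c<N. (\<Sum>\<rho>\<in>P. E \<rho> $$ (r, c)) = 1\<^sub>m N $$ (r, c)"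
    and u: "u \<in> carrier_vec N" "u \<bullet>c u = 1" and v: "v \<in> carrier_vec N" "v \<bullet>c v = 1"
    and success: "Re ((E \<sigma> *\<^sub>v u) \<bullet>c u) \<ge> 1 - \<epsilon>" "Re ((E \<tau> *\<^sub>v v) \<bullet>c v) \<ge> 1 - \<epsilon>"
    and "\<epsilon> < 1 / 2"
  shows "cmod (u \<bullet>c v) \<le> 2 * sqrt (\<epsilon> * (1 - \<epsilon>))"
proof -
  define A where "A i j = E \<sigma> $$ (i, j)" for i j
  define B where "B i j = (\<Sum>\<rho>\<in>P - {\<sigma>}. E \<rho> $$ (i, j))" for i j
  define p where "p = Re (sesq N A (($) u) (($) u))"
  define q where "q = Re (sesq N A (($) v) (($) v))"
  have resolution: "A i j + B i j = 1\<^sub>m N $$ (i, j)" if "i < N" "j < N" for i j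
    using complete that sum.remove[OF \<open>finite P\<close> \<open>\<sigma> \<in> P\<close>, of "\<lambda>\<rho>. E \<rho> $$ (i, j)"]
    unfolding A_def B_def by simp
  have sesq_E: "(E \<rho> *\<^sub>v x) \<bullet>c x = sesq N (\<lambda>i j. E \<rho> $$ (i, j)) (($) x) (($) x)"
    if "\<rho> \<in> P" "x \<in> carrier_vec N" for \<rho> x
    using psd that unfolding psd_mat_def by (blast intro: sesq_mat_vec)
  have sesq_B: "sesq N B x y = (\<Sum>\<rho>\<in>P - {\<sigma>}. sesq N (\<lambda>i j. E \<rho> $$ (i, j)) x y)" for x y
    unfolding B_def by (rule sesq_sum_kernel)
  have psd_A: "0 \<le> Re (sesq N A z z)" for z
    unfolding A_def using psd \<open>\<sigma> \<in> P\<close> by (blast intro: psd_mat_sesq_nonneg)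
  have psd_B: "0 \<le> Re (sesq N B z z)" for z
    unfolding sesq_B Re_sum using psd by (auto intro!: sum_nonneg psd_mat_sesq_nonneg)
  have herm_A: "\<And>i j. i < N \<Longrightarrow> j < N \<Longrightarrow> A i j = cnj (A j i)"
    unfolding A_def using psd \<open>\<sigma> \<in> P\<close> by (blast intro: psd_mat_hermitian)
  have herm_B: "\<And>i j. i < N \<Longrightarrow> j < N \<Longrightarrow> B i j = cnj (B j i)"
    unfolding B_def cnj_sum using psd by (auto intro!: sum.cong psd_mat_hermitian)
  have "1 - \<epsilon> \<le> p"
    using success(1) sesq_E[OF \<open>\<sigma> \<in> P\<close> u(1)] unfolding p_def A_def by simp
  have "Re (sesq N (\<lambda>i j. E \<tau> $$ (i, j)) (($) v) (($) v)) \<le> Re (sesq N B (($) v) (($) v))"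
    unfolding sesq_B Re_sum using assms(1,3,4) psd
    by (intro member_le_sum) (auto intro: psd_mat_sesq_nonneg)
  then have "q \<le> \<epsilon>"
    using success(2) sesq_E[OF \<open>\<tau> \<in> P\<close> v(1)] Re_sesq_add_Re_sesq_unit[OF resolution v] unfolding q_def by simp
  have "cmod (u \<bullet>c v) \<le> sqrt (p * q) + sqrt ((1 - p) * (1 - q))"
    unfolding p_def q_def by (rule cmod_cscalar_prod_le_of_resolution[OF psd_A psd_B herm_A herm_B resolution u v])
  also have "\<dots> \<le> 2 * sqrt (\<epsilon> * (1 - \<epsilon>))"
    using \<open>1 - \<epsilon> \<le> p\<close> \<open>q \<le> \<epsilon>\<close> \<open>\<epsilon> < 1 / 2\<close> psd_A[of "($) v"] psd_B[of "($) u"] Re_sesq_add_Re_sesq_unit[OF resolution u]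
    unfolding p_def q_def by (intro sqrt_mult_add_sqrt_compl_mult_le) auto
  finally show ?thesis .
qed

lemma mult_add_less_mult:
  fixes X Y K c :: nat
  assumes "X < Y" "c < K"
  shows "X * K + c < Y * K"
proof -
  have "X * K + c < Suc X * K" using assms(2) by simp
  also have "\<dots> \<le> Y * K" using assms(1) by (intro mult_le_mono1) simp
  finally show ?thesis .
qed

lemma bidx_less_dimH:
  assumes "i < n" "j < n" "b < 2" "c < 2 ^ w"
  shows "bidx n w i j b c < dimH n w"
  unfolding bidx_def dimH_def using assms by (intro mult_add_less_mult) auto

lemma bidx_components:
  assumes "i < n" "j < n" "b < 2" "c < 2 ^ w"
  shows "bidx n w i j b c mod 2 ^ w = c" "bidx n w i j b c div 2 ^ w mod 2 = b"
    "bidx n w i j b c div 2 ^ w div 2 div n = i" "bidx n w i j b c div 2 ^ w div 2 mod n = j"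
proof -
  have q: "bidx n w i j b c div 2 ^ w = (i * n + j) * 2 + b"
    unfolding bidx_def using assms by simp
  show "bidx n w i j b c mod 2 ^ w = c"
    unfolding bidx_def using assms by simp
  show "bidx n w i j b c div 2 ^ w mod 2 = b"
    unfolding q using assms(3) by (simp only: mod_mult_self3) simp
  have "bidx n w i j b c div 2 ^ w div 2 = i * n + j"
    unfolding q using assms(3) by simp
  then show "bidx n w i j b c div 2 ^ w div 2 div n = i" "bidx n w i j b c div 2 ^ w div 2 mod n = j"
    using assms by simp_all
qed

lemma bidx_inject:
  assumes "i < n" "j < n" "b < 2" "c < 2 ^ w" "i' < n" "j' < n" "b' < 2" "c' < 2 ^ w"
  shows "bidx n w i j b c = bidx n w i' j' b' c' \<longleftrightarrow> i = i' \<and> j = j' \<and> b = b' \<and> c = c'"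
  using bidx_components[OF assms(1-4)] bidx_components[OF assms(5-8)] by metis

lemma bidx_cases:
  assumes "r < dimH n w"
  obtains i j b c where "i < n" "j < n" "b < 2" "c < 2 ^ w" "r = bidx n w i j b c"
proof
  have "r div 2 ^ w div 2 < n * n"
    using assms unfolding dimH_def by (simp add: less_mult_imp_div_less)
  then show "r div 2 ^ w div 2 div n < n"
    by (simp add: less_mult_imp_div_less)
  show "r div 2 ^ w div 2 mod n < n"
    using assms unfolding dimH_def by (cases n) auto
  show "r = bidx n w (r div 2 ^ w div 2 div n) (r div 2 ^ w div 2 mod n) (r div 2 ^ w mod 2) (r mod 2 ^ w)"
    unfolding bidx_def by (metis div_mult_mod_eq mult.commute)
qed simp_all

definition oracle_perm :: "nat \<Rightarrow> nat \<Rightarrow> (nat \<Rightarrow> nat) \<Rightarrow> nat \<Rightarrow> nat" where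
  "oracle_perm n w \<sigma> r =
    (let i = r div 2 ^ w div 2 div n; j = r div 2 ^ w div 2 mod n
     in bidx n w i j ((r div 2 ^ w mod 2 + cmpM \<sigma> i j) mod 2) (r mod 2 ^ w))"

lemma oracle_perm_bidx:
  assumes "i < n" "j < n" "b < 2" "c < 2 ^ w"
  shows "oracle_perm n w \<sigma> (bidx n w i j b c) = bidx n w i j ((b + cmpM \<sigma> i j) mod 2) c"
  unfolding oracle_perm_def Let_def bidx_components[OF assms] ..

lemma oracle_perm_bij: "bij_betw (oracle_perm n w \<sigma>) {..<dimH n w} {..<dimH n w}"
proof -
  have "oracle_perm n w \<sigma> r < dimH n w \<and> oracle_perm n w \<sigma> (oracle_perm n w \<sigma> r) = r"
    if "r < dimH n w" for r
  proof -
    obtain i j b c where ijbc: "i < n" "j < n" "b < 2" "c < 2 ^ w" and r: "r = bidx n w i j b c"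
      using bidx_cases[OF \<open>r < dimH n w\<close>] .
    have "b = 0 \<or> b = 1"
      using \<open>b < 2\<close> by auto
    then have "(b + cmpM \<sigma> i j) mod 2 < 2" "((b + cmpM \<sigma> i j) mod 2 + cmpM \<sigma> i j) mod 2 = b"
      by (auto simp: cmpM_def)
    then show ?thesis
      unfolding r using ijbc by (simp add: oracle_perm_bidx bidx_less_dimH)
  qed
  then show ?thesis
    by (intro bij_betw_byWitness[where f' = "oracle_perm n w \<sigma>"]) auto
qed

lemma Omat_index:
  assumes "r < dimH n w" "s < dimH n w"
  shows "Omat n w \<sigma> $$ (r, s) = (if r = oracle_perm n w \<sigma> s then 1 else 0)"
proof -
  obtain i j b c where ijbc: "i < n" "j < n" "b < 2" "c < 2 ^ w" and s: "s = bidx n w i j b c"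
    using bidx_cases[OF assms(2)] .
  have "(\<exists>i<n. \<exists>j<n. \<exists>b<2. \<exists>c<2 ^ w.
      s = bidx n w i j b c \<and> r = bidx n w i j ((b + cmpM \<sigma> i j) mod 2) c)
    \<longleftrightarrow> r = bidx n w i j ((b + cmpM \<sigma> i j) mod 2) c"
    unfolding s using ijbc bidx_inject[OF ijbc] by blast
  also have "\<dots> \<longleftrightarrow> r = oracle_perm n w \<sigma> s"
    unfolding s oracle_perm_bidx[OF ijbc] ..
  finally show ?thesis
    unfolding Omat_def using assms by simp
qed

lemma unitary_Omat: "unitary_mat (dimH n w) (Omat n w \<sigma>)"
proof (rule unitary_mat_of_permutation[OF _ oracle_perm_bij[of n w \<sigma>]])
  show "Omat n w \<sigma> \<in> carrier_mat (dimH n w) (dimH n w)"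
    unfolding Omat_def by simp
qed (simp add: Omat_index)

lemma psi_unit_vector:
  assumes "\<forall>t\<le>T. unitary_mat (dimH n w) (U t)" "0 < n" "t \<le> T"
  shows "psi n w U \<sigma> t \<in> carrier_vec (dimH n w) \<and> psi n w U \<sigma> t \<bullet>c psi n w U \<sigma> t = 1"
  using \<open>t \<le> T\<close>
proof (induction t)
  case 0
  have "unitary_mat (dimH n w) (U 0)" "0 < dimH n w" "bidx n w 0 0 0 0 = 0"
    using assms(1,2) by (simp_all add: dimH_def bidx_def)
  then show ?case
    by (auto simp: unitary_mat_cscalar_prod unitary_mat_def conjugate_complex_def)
next
  case (Suc t)
  then have "psi n w U \<sigma> t \<in> carrier_vec (dimH n w)" "psi n w U \<sigma> t \<bullet>c psi n w U \<sigma> t = 1"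
    "unitary_mat (dimH n w) (U (Suc t))"
    using assms(1) by auto
  then show ?case
    using unitary_Omat[of n w \<sigma>]
    by (auto simp: unitary_mat_cscalar_prod unitary_mat_def)
qed

lemma wt_nonneg: "0 \<le> wt n \<sigma> \<tau>"
  unfolding wt_def by simp

lemma wt_nonzero_imp_neq:
  assumes "\<sigma> \<in> perms n" "wt n \<sigma> \<tau> \<noteq> 0"
  shows "\<sigma> \<noteq> \<tau>"
proof -
  have "\<exists>k d. valid_kd n k d \<and> \<tau> = cyc k d \<circ> \<sigma>"
    using assms(2) unfolding wt_def by (rule contrapos_np) auto
  then obtain k d where "valid_kd n k d" and \<tau>: "\<tau> = cyc k d \<circ> \<sigma>"
    by blast
  then have "1 \<le> d"
    unfolding valid_kd_def by simp
  have "surj \<sigma>"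
    using assms(1) permutes_surj unfolding perms_def by blast
  then obtain x where "\<sigma> x = k"
    by (metis surjD)
  then have "\<tau> x = k + d"
    unfolding \<tau> cyc_def by simp
  with \<open>\<sigma> x = k\<close> \<open>1 \<le> d\<close> show ?thesis
    by auto
qed

lemma s_prog_le_of_overlap_bound:
  assumes U: "\<forall>t\<le>T. unitary_mat (dimH n w) (U t)" and "0 < n"
    and overlap: "\<And>\<sigma> \<tau>. \<sigma> \<in> perms n \<Longrightarrow> \<tau> \<in> perms n \<Longrightarrow> \<sigma> \<noteq> \<tau> \<Longrightarrow>
      cmod (psi n w U \<sigma> T \<bullet>c psi n w U \<tau> T) \<le> B"
  shows "s_prog n w U T \<le> B * s_prog n w U 0"
proof -
  have initial: "cmod (psi n w U \<sigma> 0 \<bullet>c psi n w U \<tau> 0) = 1" for \<sigma> \<tau>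
    using psi_unit_vector[OF U \<open>0 < n\<close>, of 0 \<sigma>] by simp
  have "wt n \<sigma> \<tau> * cmod (psi n w U \<sigma> T \<bullet>c psi n w U \<tau> T) \<le> B * wt n \<sigma> \<tau>"
    if "\<sigma> \<in> perms n" "\<tau> \<in> perms n" for \<sigma> \<tau>
    using overlap[OF that] wt_nonzero_imp_neq[OF that(1)] wt_nonneg[of n \<sigma> \<tau>]
    by (cases "wt n \<sigma> \<tau> = 0") (auto simp: mult.commute intro: mult_left_mono)
  then have "s_prog n w U T \<le> (\<Sum>\<sigma>\<in>perms n. \<Sum>\<tau>\<in>perms n. B * wt n \<sigma> \<tau>)"
    unfolding s_prog_def by (intro sum_mono)
  also have "\<dots> = B * s_prog n w U 0"
    unfolding s_prog_def initial by (simp add: sum_distrib_left)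
  finally show ?thesis .
qed

theorem lemma2:
  fixes n w T :: nat and \<epsilon> :: real
    and U :: "nat \<Rightarrow> complex mat"
    and E :: "(nat \<Rightarrow> nat) \<Rightarrow> complex mat"
  assumes "n \<ge> 2" and "0 \<le> \<epsilon>" and "\<epsilon> < 1 / 2"
    and "\<forall>t\<le>T. unitary_mat (dimH n w) (U t)"
    and "\<forall>\<sigma>\<in>perms n. psd_mat (dimH n w) (E \<sigma>)"
    and "\<forall>r<dimH n w. \<forall>c<dimH n w. (\<Sum>\<sigma>\<in>perms n. E \<sigma> $$ (r, c)) = 1\<^sub>m (dimH n w) $$ (r, c)"
    and "\<forall>\<sigma>\<in>perms n. Re ((E \<sigma> *\<^sub>v psi n w U \<sigma> T) \<bullet>c psi n w U \<sigma> T) \<ge> 1 - \<epsilon>"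
  shows "s_prog n w U T \<le> 2 * sqrt (\<epsilon> * (1 - \<epsilon>)) * s_prog n w U 0"
proof (rule s_prog_le_of_overlap_bound)
  show "0 < n" using \<open>n \<ge> 2\<close> by simp
  fix \<sigma> \<tau> assume "\<sigma> \<in> perms n" "\<tau> \<in> perms n" "\<sigma> \<noteq> \<tau>"
  moreover have "finite (perms n)"
    unfolding perms_def by (simp add: finite_permutations)
  moreover have "psi n w U \<rho> T \<in> carrier_vec (dimH n w)" "psi n w U \<rho> T \<bullet>c psi n w U \<rho> T = 1" for \<rho>
    using psi_unit_vector[OF assms(4)] \<open>n \<ge> 2\<close> by simp_all
  ultimately show "cmod (psi n w U \<sigma> T \<bullet>c psi n w U \<tau> T) \<le> 2 * sqrt (\<epsilon> * (1 - \<epsilon>))"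
    using assms(3,5-7) by (intro cmod_cscalar_prod_le_of_povm[where P = "perms n" and E = E]) auto
qed (rule assms(4))

end
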